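(* Let $(\mathbf{J}_1^t,\mathbf{J}_2^t)$ be a canonical family of generalized Kähler structures driven by real 2-forms $K_t$, and let $(g_t,b_t,I_t,J_t)$ be the corresponding one-parameter family of bihermitian data. Then, writing $K=K_t$ and dots for $\partial_t$, $$\dot g=-\tfrac12[K,I],\quad \dot b=-\tfrac12\{K,I\},\quad \dot\omega_I=-\tfrac12[K,I]I,\quad \dot\omega_J=-\tfrac12\{K,IJ\},\quad \dot I=0,\quad \dot J=\tfrac12[I,J]g^{-1}K.$$
   Context: Bihermitian data $(g,b,I,J)$ correspond to $(\mathbf{J}_1,\mathbf{J}_2)$ via the Gualtieri map $\mathbf{J}_{1/2}=\tfrac12 e^b\begin{pmatrix} I\pm J & -(\omega_I^{-1}\mp\omega_J^{-1})\\ \omega_I\mp\omega_J & -(I^*\pm J^* )\end{pmatrix}e^{-b}$, with $\omega_I=gI$, $\omega_J=gJ$ viewed as maps $T\to T^*$ and $I^*,J^*$ the dual endomorphisms of $T^*$. A generalized Kähler structure is a pair of commuting integrable generalized complex structures with $\langle-\mathbf{J}_1\mathbf{J}_2\cdot,\cdot\rangle>0$. For a 2-form $K$, $e^K(X+\xi)=X+\xi+K(X,\cdot)$ and $\Phi_K(\mathbf{J})=[\mathbf{J},e^K\mathbf{J}]$; a canonical family is a one-parameter family of generalized Kähler structures with $\partial_t\mathbf{J}_i^t=\Phi_{K_t}(\mathbf{J}_i^t)$ for $i=1,2$. All expressions are compositions of maps: 2-forms are maps $T\to T^*$, $g^{-1}:T^*\to T$, and for a 2-form $K$ and endomorphism $A$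 of $T$, $[K,A]=KA-A^*K$ and $\{K,A\}=KA+A^*K$. *)

theory Defs
  imports "HOL-Analysis.Analysis"
begin

text \<open>Pointwise (linear-algebraic) model.  The tangent space T at a point is
  real^'n; a covector is also represented by a vector in real^'n via
  xi(X) = xi \<bullet> X.  Hence a linear map T \<to> T, T* \<to> T, T \<to> T* or T* \<to> T*
  is a matrix real^'n^'n, the dual endomorphism A* of A is transpose A, and a
  2-form K is represented by the map X \<mapsto> K(X, -), i.e. a matrix with
  transpose K = - K.  The generalized tangent space T \<oplus> T* is
  real^('n + 'n): Inl-indices are the T-component, Inr-indices the T*-component.\<close>

type_synonym 'n sqmat = "real^'n^'n"
type_synonym 'n gmat = "real^('n + 'n)^('n + 'n)"

definition gblock :: "'n::finite sqmat \<Rightarrow> 'n sqmat \<Rightarrow> 'n sqmat \<Rightarrow> 'n sqmat \<Rightarrow> 'n gmat" where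
  "gblock A B C D = (\<chi> i j. case i of
      Inl a \<Rightarrow> (case j of Inl c \<Rightarrow> A $ a $ c | Inr c \<Rightarrow> B $ a $ c)
    | Inr a \<Rightarrow> (case j of Inl c \<Rightarrow> C $ a $ c | Inr c \<Rightarrow> D $ a $ c))"

text \<open>B-field transform e^K (X + xi) = X + xi + K(X, -).\<close>
definition bexp :: "'n::finite sqmat \<Rightarrow> 'n gmat" where
  "bexp K = gblock (mat 1) 0 K (mat 1)"

definition gualtieri :: "real \<Rightarrow> 'n::finite sqmat \<Rightarrow> 'n sqmat \<Rightarrow> 'n sqmat \<Rightarrow> 'n sqmat \<Rightarrow> 'n gmat" where
  "gualtieri s g b I J =
     (1/2) *\<^sub>R (bexp b **
        gblock (I + s *\<^sub>R J)
               (- (matrix_inv (g ** I) - s *\<^sub>R matrix_inv (g ** J)))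
               (g ** I - s *\<^sub>R (g ** J))
               (- (transpose I + s *\<^sub>R transpose J))
        ** bexp (- b))"

definition J1_of :: "'n::finite sqmat \<Rightarrow> 'n sqmat \<Rightarrow> 'n sqmat \<Rightarrow> 'n sqmat \<Rightarrow> 'n gmat" where
  "J1_of g b I J = gualtieri 1 g b I J"

definition J2_of :: "'n::finite sqmat \<Rightarrow> 'n sqmat \<Rightarrow> 'n sqmat \<Rightarrow> 'n sqmat \<Rightarrow> 'n gmat" where
  "J2_of g b I J = gualtieri (-1) g b I J"

definition PhiK :: "'n::finite sqmat \<Rightarrow> 'n gmat \<Rightarrow> 'n gmat" where
  "PhiK K JJ = JJ ** (bexp K ** JJ) - (bexp K ** JJ) ** JJ"

definition formbr :: "'n::finite sqmat \<Rightarrow> 'n sqmat \<Rightarrow> 'n sqmat" where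
  "formbr K A = K ** A - transpose A ** K"

definition formac :: "'n::finite sqmat \<Rightarrow> 'n sqmat \<Rightarrow> 'n sqmat" where
  "formac K A = K ** A + transpose A ** K"

definition endo_comm :: "'n::finite sqmat \<Rightarrow> 'n sqmat \<Rightarrow> 'n sqmat" where
  "endo_comm A B = A ** B - B ** A"

definition is_2form :: "'n::finite sqmat \<Rightarrow> bool" where
  "is_2form K \<longleftrightarrow> transpose K = - K"

definition bihermitian :: "'n::finite sqmat \<Rightarrow> 'n sqmat \<Rightarrow> 'n sqmat \<Rightarrow> 'n sqmat \<Rightarrow> bool" where
  "bihermitian g b I J \<longleftrightarrow>
     transpose g = g \<and> (\<forall>x. x \<noteq> 0 \<longrightarrow> x \<bullet> (g *v x) > 0) \<and>
     is_2form b \<and>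
     I ** I = - mat 1 \<and> J ** J = - mat 1 \<and>
     transpose I ** g ** I = g \<and> transpose J ** g ** J = g"

end

theory Submission
  imports Defs
begin

text \<open>Write \<open>\<sigma> = (gI)\<inverse> = -Ig\<inverse>\<close>, \<open>\<tau> = (gJ)\<inverse> = -Jg\<inverse>\<close> and \<open>k = K/2\<close>.
  Sums and differences of the upper blocks of \<open>J\<^sub>1\<close> and \<open>J\<^sub>2\<close> are \<open>\<sigma>\<close>, \<open>\<tau>\<close>,
  \<open>I + \<sigma>b\<close> and \<open>J - \<tau>b\<close>, so
  differentiating them along the canonical flow gives linear equations for the variations
  \<open>g', b', I', J'\<close>.  Solving the equations coming from \<open>I\<close> for \<open>g'\<close> writes it as the
  symmetric form \<open>-(kI + gIg\<inverse>k)\<close> plus an antisymmetric remainder, which vanishes because \<open>g'\<close>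
  is symmetric; the equations coming from \<open>J\<close> determine \<open>b'\<close> in the same way.  Comparing the
  two resulting expressions for \<open>b'\<close> shows that \<open>I' = -(g\<inverse>k + Jg\<inverse>kJ)\<close> commutes with \<open>I\<close>,
  whereas differentiating \<open>I\<^sup>2 = -1\<close> shows that it anticommutes with \<open>I\<close>.  Hence \<open>I' = 0\<close>,
  and \<open>J'\<close> follows.\<close>

section \<open>Linearized flow equations in an algebra with transposition\<close>

lemma add_self_eq_zero: "a + a = 0 \<longleftrightarrow> (a::'a::real_vector) = 0"
  by (metis scaleR_2 scaleR_eq_0_iff zero_neq_numeral)

locale additive_antimorphism =
  fixes tp :: "'a::real_algebra_1 \<Rightarrow> 'a"
  assumes tp_mult: "tp (a * b) = tp b * tp a"
    and tp_add: "tp (a + b) = tp a + tp b"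
begin

lemma tp_uminus: "tp (- a) = - tp a"
proof -
  have "tp 0 = 0" using tp_add[of 0 0] by simp
  then have "tp a + tp (- a) = 0" using tp_add[of a "- a"] by simp
  then show ?thesis by (metis minus_unique)
qed

lemma tp_diff: "tp (a - b) = tp a - tp b"
  using tp_add[of a "- b"] by (simp add: tp_uminus)

lemma antisymmetric_summand_zero:
  assumes "tp (S + A) = S + A" "tp S = S" "tp A = - A"
  shows "A = 0"
proof -
  have "- A = A" using assms by (simp add: tp_add)
  then show ?thesis by (metis add.right_inverse add_self_eq_zero)
qed

end

locale bihermitian_algebra = additive_antimorphism +
  fixes g h I J :: "'a::real_algebra_1"
  assumes g_h: "g * h = 1" and h_g: "h * g = 1"
    and I_I: "I * I = - 1" and J_J: "J * J = - 1"
    and tp_g: "tp g = g" and tp_h: "tp h = h"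
    and tp_I: "tp I = - (g * I * h)" and tp_J: "tp J = - (g * J * h)"
begin

lemma mult_inverse_cancel:
  "g * (h * z) = z" "h * (g * z) = z" "I * (I * z) = - z" "J * (J * z) = - z"
  using g_h h_g I_I J_J by (simp_all flip: mult.assoc)

lemmas inverse_simps = g_h h_g I_I J_J mult_inverse_cancel
lemmas tp_simps = tp_mult tp_add tp_diff tp_uminus tp_g tp_h tp_I tp_J

lemma metric_variation:
  assumes tp_G: "tp G = G" and tp_x: "tp x = - x" and tp_k: "tp k = - k"
    and gI: "G * I + g * P = k + g * I * J * h * k * J * I"
    and P: "P = I * h * k * I - J * h * k * J + I * h * x"
  shows "G = - (k * I + g * I * h * k)" and "x = g * J * h * k * J * I - g * I * J * h * k * J"
proof -
  define A where "A = g * I * J * h * k * J - g * J * h * k * J * I + g * I * h * x * I"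
  have "G = (G * I + g * P) * (- I) + g * P * I" by (simp add: algebra_simps inverse_simps)
  also have "\<dots> = (k + g * I * J * h * k * J * I) * (- I)
      + g * (I * h * k * I - J * h * k * J + I * h * x) * I"
    by (subst gI, subst P) (rule refl)
  also have "\<dots> = - (k * I + g * I * h * k) + A"
    unfolding A_def by (simp add: algebra_simps inverse_simps)
  finally have G: "G = - (k * I + g * I * h * k) + A" .
  have "A = 0"
  proof (rule antisymmetric_summand_zero)
    show "tp (- (k * I + g * I * h * k) + A) = - (k * I + g * I * h * k) + A"
      using tp_G G by simp
    show "tp (- (k * I + g * I * h * k)) = - (k * I + g * I * h * k)"
      using tp_k by (simp add: tp_simps algebra_simps inverse_simps)
    show "tp A = - A"
      using tp_x tp_k unfolding A_def by (simp add: tp_simps algebra_simps inverse_simps)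
  qed
  then show "G = - (k * I + g * I * h * k)" using G by simp
  have "x = g * I * h * A * I - g * I * h * (g * I * J * h * k * J - g * J * h * k * J * I) * I"
    unfolding A_def by (simp add: algebra_simps inverse_simps)
  with \<open>A = 0\<close> show "x = g * J * h * k * J * I - g * I * J * h * k * J"
    by (simp add: algebra_simps inverse_simps)
qed

lemma bfield_variation:
  assumes tp_G: "tp G = G" and tp_x: "tp x = - x" and tp_k: "tp k = - k"
    and gJ: "G * J + g * Q = - (g * J * I * h * k + k * I * J)"
    and Q: "Q = I * h * k * J - J * h * k * I - J * h * x"
  shows "x = g * I * h * k - k * I"
proof -
  define A where "A = g * J * I * h * k * J - g * J * h * k * I * J - g * J * h * x * J"
  have "G = (G * J + g * Q) * (- J) + g * Q * J" by (simp add: algebra_simps inverse_simps)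
  also have "\<dots> = - (g * J * I * h * k + k * I * J) * (- J)
      + g * (I * h * k * J - J * h * k * I - J * h * x) * J"
    by (subst gJ, subst Q) (rule refl)
  also have "\<dots> = - (k * I + g * I * h * k) + A"
    unfolding A_def by (simp add: algebra_simps inverse_simps)
  finally have G: "G = - (k * I + g * I * h * k) + A" .
  have "A = 0"
  proof (rule antisymmetric_summand_zero)
    show "tp (- (k * I + g * I * h * k) + A) = - (k * I + g * I * h * k) + A"
      using tp_G G by simp
    show "tp (- (k * I + g * I * h * k)) = - (k * I + g * I * h * k)"
      using tp_k by (simp add: tp_simps algebra_simps inverse_simps)
    show "tp A = - A"
      using tp_x tp_k unfolding A_def by (simp add: tp_simps algebra_simps inverse_simps)
  qed
  have "x = g * J * h * (g * J * I * h * k * J - g * J * h * k * I * J - A) * J"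
    unfolding A_def by (simp add: algebra_simps inverse_simps)
  with \<open>A = 0\<close> show ?thesis by (simp add: algebra_simps inverse_simps)
qed

lemma complex_structure_variation:
  assumes x_I: "x = g * J * h * k * J * I - g * I * J * h * k * J"
    and x_J: "x = g * I * h * k - k * I"
    and P: "P = I * h * k * I - J * h * k * J + I * h * x"
    and P_I: "P * I + I * P = 0"
  shows "h * k + J * h * k * J = 0"
proof -
  define C where "C = h * k + J * h * k * J"
  have "I * C - C * I = h * (g * I * h * k - k * I) - h * (g * J * h * k * J * I - g * I * J * h * k * J)"
    unfolding C_def by (simp add: algebra_simps inverse_simps)
  then have commute: "C * I = I * C" using x_I x_J by simp
  have "P = - C" unfolding P x_J C_def by (simp add: algebra_simps inverse_simps)
  then have "- (I * C) = I * C" using P_I commute by (simp add: algebra_simps)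
  then have "I * C = 0" by (metis add.right_inverse add_self_eq_zero)
  then have "C = 0" using mult_inverse_cancel(3)[of C] by simp
  then show ?thesis unfolding C_def .
qed

text \<open>Read \<open>tp\<close> as transposition, \<open>h\<close> as \<open>g\<inverse>\<close>, \<open>G, x, P, Q\<close> as the derivatives of
  \<open>g, b, I, J\<close>, \<open>\<sigma>, \<tau>\<close> as \<open>(gI)\<inverse>, (gJ)\<inverse>\<close> and \<open>k\<close> as \<open>K/2\<close>.\<close>

lemma linearized_flow_solution:
  assumes sigma: "\<sigma> = - (I * h)" and tau: "\<tau> = - (J * h)"
    and tp_G: "tp G = G" and tp_x: "tp x = - x" and tp_k: "tp k = - k"
    and gI: "G * I + g * P = g * I * (\<sigma> * k * \<sigma> + \<tau> * k * \<tau>) * (g * I)"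
    and gJ: "G * J + g * Q = g * J * (\<sigma> * k * \<tau> + \<tau> * k * \<sigma>) * (g * J)"
    and P: "P + \<sigma> * x = - (\<sigma> * k * I - \<tau> * k * J)"
    and Q: "Q - \<tau> * x = - (\<sigma> * k * J - \<tau> * k * I)"
    and P_I: "P * I + I * P = 0"
  shows "G = - (k * I - tp I * k)" and "x = - (k * I + tp I * k)" and "P = 0"
    and "Q = (I * J - J * I) * h * k" and "G * J + g * Q = - (k * (I * J) + tp (I * J) * k)"
proof -
  have "g * I * (\<sigma> * k * \<sigma> + \<tau> * k * \<tau>) * (g * I) = k + g * I * J * h * k * J * I"
    unfolding sigma tau by (simp add: algebra_simps inverse_simps)
  with gI have gI': "G * I + g * P = k + g * I * J * h * k * J * I" by simp
  have "g * J * (\<sigma> * k * \<tau> + \<tau> * k * \<sigma>) * (g * J) = - (g * J * I * h * k + k * I * J)"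
    unfolding sigma tau by (simp add: algebra_simps inverse_simps)
  with gJ have gJ': "G * J + g * Q = - (g * J * I * h * k + k * I * J)" by simp
  have P': "P = I * h * k * I - J * h * k * J + I * h * x"
    using P unfolding sigma tau by (simp add: algebra_simps)
  have Q': "Q = I * h * k * J - J * h * k * I - J * h * x"
    using Q unfolding sigma tau by (simp add: algebra_simps)
  have G: "G = - (k * I + g * I * h * k)" and x_I: "x = g * J * h * k * J * I - g * I * J * h * k * J"
    using metric_variation[OF tp_G tp_x tp_k gI' P'] by blast+
  have x_J: "x = g * I * h * k - k * I"
    by (rule bfield_variation[OF tp_G tp_x tp_k gJ' Q'])
  have C: "h * k + J * h * k * J = 0"
    by (rule complex_structure_variation[OF x_I x_J P' P_I])
  show "G = - (k * I - tp I * k)" using G by (simp add: tp_I algebra_simps)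
  show "x = - (k * I + tp I * k)" using x_J by (simp add: tp_I algebra_simps)
  have "P = - (h * k + J * h * k * J)" unfolding P' x_J by (simp add: algebra_simps inverse_simps)
  with C show "P = 0" by simp
  have "J * (h * k + J * h * k * J) = J * h * k - h * k * J" by (simp add: algebra_simps inverse_simps)
  then have hkJ: "h * (k * J) = J * (h * k)" using C by (simp add: mult.assoc)
  show "Q = (I * J - J * I) * h * k"
    unfolding Q' x_J by (simp add: algebra_simps inverse_simps hkJ)
  have "- (k * (I * J) + tp (I * J) * k) = - (g * J * I * h * k + k * I * J)"
    by (simp add: tp_simps algebra_simps inverse_simps)
  with gJ' show "G * J + g * Q = - (k * (I * J) + tp (I * J) * k)" by simp
qed

end

section \<open>Square matrices as a real algebra\<close>

lemma matrix_add_rdistrib: "(A + B) ** C = A ** C + B ** (C::real^'n::finite^'n)"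
  by (simp add: matrix_matrix_mult_def vec_eq_iff sum.distrib algebra_simps)

lemma matrix_scaleR_left: "(c *\<^sub>R A) ** B = c *\<^sub>R (A ** B::real^'n::finite^'n)"
  by (simp add: scalar_matrix_assoc)

lemma matrix_scaleR_right: "A ** (c *\<^sub>R B) = c *\<^sub>R (A ** B::real^'n::finite^'n)"
  by (simp add: matrix_scalar_ac scalar_matrix_assoc)

lemma matrix_mul_minus_left: "(- A) ** B = - (A ** B::real^'n::finite^'n)"
  by (simp add: matrix_matrix_mult_def vec_eq_iff sum_negf)

lemma matrix_mul_minus_right: "A ** (- B) = - (A ** B::real^'n::finite^'n)"
  by (simp add: matrix_matrix_mult_def vec_eq_iff sum_negf)

lemma transpose_add: "transpose (A + B) = transpose A + transpose (B::real^'n::finite^'n)"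
  by (simp add: transpose_def vec_eq_iff)

lemma bounded_bilinear_matrix_mult:
  "bounded_bilinear ((**) :: real^'n::finite^'n \<Rightarrow> real^'n^'n \<Rightarrow> real^'n^'n)"
  unfolding bilinear_conv_bounded_bilinear[symmetric] bilinear_def
  by (auto intro!: linearI simp: matrix_add_ldistrib matrix_add_rdistrib matrix_scaleR_left matrix_scaleR_right)

lemma bounded_linear_transpose: "bounded_linear (transpose :: real^'n::finite^'n \<Rightarrow> _)"
  unfolding linear_conv_bounded_linear[symmetric]
  by (auto intro!: linearI simp: transpose_add transpose_scalar)

text \<open>On \<open>real^'n^'n\<close> itself \<open>*\<close> is the componentwise product; this copy carries matrix
  multiplication instead, so that ring automation applies to matrix identities.\<close>

typedef (overloaded) ('n::finite) matalg = "UNIV :: (real^'n^'n) set"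
  morphisms matrix_of Alg by simp

setup_lifting type_definition_matalg

instantiation matalg :: (finite) real_algebra_1
begin
lift_definition zero_matalg :: "'n::finite matalg" is 0 .
lift_definition one_matalg :: "'n::finite matalg" is "mat 1" .
lift_definition plus_matalg :: "'n::finite matalg \<Rightarrow> 'n matalg \<Rightarrow> 'n matalg" is "(+)" .
lift_definition minus_matalg :: "'n::finite matalg \<Rightarrow> 'n matalg \<Rightarrow> 'n matalg" is "(-)" .
lift_definition uminus_matalg :: "'n::finite matalg \<Rightarrow> 'n matalg" is uminus .
lift_definition times_matalg :: "'n::finite matalg \<Rightarrow> 'n matalg \<Rightarrow> 'n matalg" is "(**)" .
lift_definition scaleR_matalg :: "real \<Rightarrow> 'n::finite matalg \<Rightarrow> 'n matalg" is "(*\<^sub>R)" .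
instance
proof
  fix a b c :: "'n::finite matalg" and r s :: real
  show "a + b + c = a + (b + c)" by transfer (simp add: add.assoc)
  show "a + b = b + a" by transfer (simp add: add.commute)
  show "0 + a = a" by transfer simp
  show "- a + a = 0" by transfer simp
  show "a - b = a + - b" by transfer simp
  show "r *\<^sub>R (a + b) = r *\<^sub>R a + r *\<^sub>R b" by transfer (simp add: scaleR_right_distrib)
  show "(r + s) *\<^sub>R a = r *\<^sub>R a + s *\<^sub>R a" by transfer (simp add: scaleR_left_distrib)
  show "r *\<^sub>R s *\<^sub>R a = (r * s) *\<^sub>R a" by transfer simp
  show "1 *\<^sub>R a = a" by transfer simp
  show "a * b * c = a * (b * c)" by transfer (simp add: matrix_mul_assoc)
  show "1 * a = a" by transfer simp
  show "a * 1 = a" by transfer simp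
  show "(a + b) * c = a * c + b * c" by transfer (simp add: matrix_add_rdistrib)
  show "a * (b + c) = a * b + a * c" by transfer (simp add: matrix_add_ldistrib)
  show "r *\<^sub>R a * b = r *\<^sub>R (a * b)" by transfer (simp add: matrix_scaleR_left)
  show "a * r *\<^sub>R b = r *\<^sub>R (a * b)" by transfer (simp add: matrix_scaleR_right)
  show "0 \<noteq> (1::'n matalg)"
    by transfer (simp add: vec_eq_iff mat_def)
qed
end

lemma Alg_hom:
  "Alg (A ** B) = Alg A * Alg B" "Alg (A + B) = Alg A + Alg B" "Alg (A - B) = Alg A - Alg B"
  "Alg (- A) = - Alg A" "Alg (c *\<^sub>R A) = c *\<^sub>R Alg A" "Alg (mat 1) = 1" "Alg 0 = 0"
  by (simp_all add: times_matalg.abs_eq plus_matalg.abs_eq minus_matalg.abs_eq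
      uminus_matalg.abs_eq scaleR_matalg.abs_eq one_matalg.abs_eq zero_matalg.abs_eq eq_onp_same_args)

lemma Alg_eq_iff: "Alg A = Alg B \<longleftrightarrow> A = B"
  by (simp add: Alg_inject)

lemmas Alg_eqI = Alg_eq_iff[THEN iffD1]

definition alg_transpose :: "'n::finite matalg \<Rightarrow> 'n matalg" where
  "alg_transpose A = Alg (transpose (matrix_of A))"

lemma alg_transpose_Alg: "alg_transpose (Alg A) = Alg (transpose A)"
  by (simp add: alg_transpose_def Alg_inverse)

interpretation alg_transpose: additive_antimorphism alg_transpose
  by unfold_locales
    (simp_all add: alg_transpose_def times_matalg.rep_eq plus_matalg.rep_eq matrix_transpose_mul
      transpose_add Alg_hom)

lemma matrix_inv_right_inverse:
  fixes A X :: "real^'n::finite^'n"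
  assumes AX: "A ** X = mat 1"
  shows "matrix_inv A = X" and "A ** matrix_inv A = mat 1" and "matrix_inv A ** A = mat 1"
proof -
  have "\<exists>A'. A ** A' = mat 1 \<and> A' ** A = mat 1"
    using AX matrix_left_right_inverse by blast
  then have inv: "A ** matrix_inv A = mat 1 \<and> matrix_inv A ** A = mat 1"
    unfolding matrix_inv_def by (rule someI_ex)
  then show "A ** matrix_inv A = mat 1" and "matrix_inv A ** A = mat 1" by auto
  have "matrix_inv A = matrix_inv A ** (A ** X)" using AX by simp
  also have "\<dots> = X" using inv by (simp add: matrix_mul_assoc)
  finally show "matrix_inv A = X" .
qed

lemma positive_definite_matrix_inv:
  fixes g :: "real^'n::finite^'n"
  assumes "\<forall>x. x \<noteq> 0 \<longrightarrow> x \<bullet> (g *v x) > 0"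
  shows "g ** matrix_inv g = mat 1" and "matrix_inv g ** g = mat 1"
proof -
  have "\<forall>x. g *v x = 0 \<longrightarrow> x = 0" using assms by force
  then obtain B where "B ** g = mat 1" using matrix_left_invertible_ker by blast
  then have "g ** B = mat 1" using matrix_left_right_inverse by blast
  then show "g ** matrix_inv g = mat 1" and "matrix_inv g ** g = mat 1"
    using matrix_inv_right_inverse by blast+
qed

lemma orthogonal_complex_structure_inverse:
  fixes g I :: "real^'n::finite^'n"
  assumes gh: "g ** matrix_inv g = mat 1" and II: "I ** I = - mat 1"
    and orth: "transpose I ** g ** I = g"
  shows "matrix_inv (g ** I) = - (I ** matrix_inv g)"
    and "(g ** I) ** matrix_inv (g ** I) = mat 1" and "matrix_inv (g ** I) ** (g ** I) = mat 1"
    and "transpose I = - (g ** I ** matrix_inv g)"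
proof -
  have II': "Alg I * (Alg I * z) = - z" for z
    using II by (metis Alg_hom(1,4,6) mult.assoc mult_1_left mult_minus_left)
  have gh': "Alg g * Alg (matrix_inv g) = 1" using gh by (metis Alg_hom(1,6))
  have "(g ** I) ** (- (I ** matrix_inv g)) = mat 1"
    by (intro Alg_eqI) (simp add: Alg_hom mult.assoc II' gh')
  note inv = matrix_inv_right_inverse[OF this]
  show "matrix_inv (g ** I) = - (I ** matrix_inv g)"
    and "(g ** I) ** matrix_inv (g ** I) = mat 1" and "matrix_inv (g ** I) ** (g ** I) = mat 1"
    using inv by blast+
  have "transpose I = (transpose I ** g ** I) ** (- (I ** matrix_inv g))"
    by (intro Alg_eqI) (simp add: Alg_hom mult.assoc II' gh')
  also have "\<dots> = - (g ** I ** matrix_inv g)"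
    unfolding orth by (intro Alg_eqI) (simp add: Alg_hom mult.assoc)
  finally show "transpose I = - (g ** I ** matrix_inv g)" .
qed

lemma transpose_matrix_inv_symmetric:
  fixes g :: "real^'n::finite^'n"
  assumes "transpose g = g" and "g ** matrix_inv g = mat 1"
  shows "transpose (matrix_inv g) = matrix_inv g"
proof -
  have "transpose (matrix_inv g) ** g = mat 1"
    using assms by (metis matrix_transpose_mul transpose_mat)
  then have "g ** transpose (matrix_inv g) = mat 1" using matrix_left_right_inverse by blast
  then show ?thesis using matrix_inv_right_inverse(1) by metis
qed

lemma bihermitian_linearized_flow_solution:
  fixes g b I J k G x P Q :: "real^'n::finite^'n"
  defines "\<sigma> \<equiv> matrix_inv (g ** I)" and "\<tau> \<equiv> matrix_inv (g ** J)"
  assumes bih: "bihermitian g b I J" and tk: "transpose k = - k"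
    and tG: "transpose G = G" and tx: "transpose x = - x"
    and gI: "G ** I + g ** P = (g ** I) ** (\<sigma> ** k ** \<sigma> + \<tau> ** k ** \<tau>) ** (g ** I)"
    and gJ: "G ** J + g ** Q = (g ** J) ** (\<sigma> ** k ** \<tau> + \<tau> ** k ** \<sigma>) ** (g ** J)"
    and P: "P + \<sigma> ** x = - (\<sigma> ** k ** I - \<tau> ** k ** J)"
    and Q: "Q - \<tau> ** x = - (\<sigma> ** k ** J - \<tau> ** k ** I)"
    and PI: "P ** I + I ** P = 0"
  shows "G = - formbr k I" and "x = - formac k I" and "P = 0"
    and "Q = endo_comm I J ** matrix_inv g ** k" and "G ** J + g ** Q = - formac k (I ** J)"
proof -
  have g_sym: "transpose g = g" and g_pos: "\<forall>x. x \<noteq> 0 \<longrightarrow> x \<bullet> (g *v x) > 0"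
    and I_I: "I ** I = - mat 1" and J_J: "J ** J = - mat 1"
    and I_orth: "transpose I ** g ** I = g" and J_orth: "transpose J ** g ** J = g"
    using bih unfolding bihermitian_def by blast+
  define h where "h = matrix_inv g"
  have gh: "g ** h = mat 1" and hg: "h ** g = mat 1"
    using positive_definite_matrix_inv[OF g_pos] unfolding h_def by blast+
  note I_facts = orthogonal_complex_structure_inverse[of g I, folded h_def, OF gh I_I I_orth]
  note J_facts = orthogonal_complex_structure_inverse[of g J, folded h_def, OF gh J_J J_orth]
  interpret bihermitian_algebra alg_transpose "Alg g" "Alg h" "Alg I" "Alg J"
  proof
    show "Alg g * Alg h = 1" "Alg h * Alg g = 1" using gh hg by (metis Alg_hom(1,6))+
    show "Alg I * Alg I = - 1" "Alg J * Alg J = - 1" using I_I J_J by (metis Alg_hom(1,4,6))+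
    show "alg_transpose (Alg g) = Alg g" "alg_transpose (Alg h) = Alg h"
      using g_sym transpose_matrix_inv_symmetric[OF g_sym] gh unfolding h_def
      by (simp_all add: alg_transpose_Alg)
    show "alg_transpose (Alg I) = - (Alg g * Alg I * Alg h)"
      "alg_transpose (Alg J) = - (Alg g * Alg J * Alg h)"
      using I_facts(4) J_facts(4) by (simp_all add: alg_transpose_Alg Alg_hom)
  qed
  note sol = linearized_flow_solution[of "Alg \<sigma>" "Alg \<tau>" "Alg G" "Alg x" "Alg k" "Alg P" "Alg Q",
      unfolded alg_transpose_Alg, folded Alg_hom, unfolded alg_transpose_Alg, folded Alg_hom,
      unfolded Alg_eq_iff]
  show "G = - formbr k I" "x = - formac k I" "P = 0"
    "Q = endo_comm I J ** matrix_inv g ** k" "G ** J + g ** Q = - formac k (I ** J)"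
    using sol[OF I_facts(1)[folded \<sigma>_def] J_facts(1)[folded \<tau>_def] tG tx tk gI gJ P Q PI]
    unfolding formbr_def formac_def endo_comm_def h_def
    by (auto simp: matrix_transpose_mul)
qed


section \<open>Block decomposition and the Gualtieri map\<close>

definition blk11 :: "'n::finite gmat \<Rightarrow> 'n sqmat" where "blk11 M = (\<chi> a c. M $ Inl a $ Inl c)"
definition blk12 :: "'n::finite gmat \<Rightarrow> 'n sqmat" where "blk12 M = (\<chi> a c. M $ Inl a $ Inr c)"
definition blk21 :: "'n::finite gmat \<Rightarrow> 'n sqmat" where "blk21 M = (\<chi> a c. M $ Inr a $ Inl c)"
definition blk22 :: "'n::finite gmat \<Rightarrow> 'n sqmat" where "blk22 M = (\<chi> a c. M $ Inr a $ Inr c)"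

lemmas blk_defs = blk11_def blk12_def blk21_def blk22_def

lemma bounded_linear_blk11: "bounded_linear (blk11 :: 'n::finite gmat \<Rightarrow> _)"
  and bounded_linear_blk12: "bounded_linear (blk12 :: 'n::finite gmat \<Rightarrow> _)"
  by (auto intro!: linearI simp: linear_conv_bounded_linear[symmetric] blk_defs vec_eq_iff)

lemma blk_gblock [simp]:
  "blk11 (gblock A B C D) = A" "blk12 (gblock A B C D) = B"
  "blk21 (gblock A B C D) = C" "blk22 (gblock A B C D) = D"
  by (simp_all add: blk_defs gblock_def vec_eq_iff)

lemma blk_scaleR [simp]: "blk11 (c *\<^sub>R M) = c *\<^sub>R blk11 M" "blk12 (c *\<^sub>R M) = c *\<^sub>R blk12 M"
  and blk_diff [simp]: "blk11 (M - N) = blk11 M - blk11 N" "blk12 (M - N) = blk12 M - blk12 N"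
  by (simp_all add: blk_defs vec_eq_iff)

lemma sum_UNIV_Plus: "(\<Sum>k\<in>UNIV. f k) = (\<Sum>k\<in>UNIV. f (Inl k)) + (\<Sum>k\<in>UNIV. f (Inr k))"
  for f :: "'a::finite + 'b::finite \<Rightarrow> 'c::comm_monoid_add"
  by (subst UNIV_Plus_UNIV[symmetric], subst sum.Plus) auto

lemma blk_matrix_mult:
  fixes M N :: "'n::finite gmat"
  shows "blk11 (M ** N) = blk11 M ** blk11 N + blk12 M ** blk21 N"
    and "blk12 (M ** N) = blk11 M ** blk12 N + blk12 M ** blk22 N"
    and "blk21 (M ** N) = blk21 M ** blk11 N + blk22 M ** blk21 N"
    and "blk22 (M ** N) = blk21 M ** blk12 N + blk22 M ** blk22 N"
  by (simp_all add: blk_defs vec_eq_iff matrix_matrix_mult_def sum_UNIV_Plus)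

lemma blk_bexp [simp]:
  "blk11 (bexp K) = mat 1" "blk12 (bexp K) = 0" "blk21 (bexp K) = K" "blk22 (bexp K) = mat 1"
  by (simp_all add: bexp_def)

lemma blk_PhiK:
  "blk12 (PhiK K M) = blk12 M ** K ** blk12 M"
  "blk11 (PhiK K M) = blk12 M ** K ** blk11 M"
  by (rule Alg_eqI, simp add: PhiK_def blk_matrix_mult Alg_hom algebra_simps)+

lemma blk_gualtieri:
  "blk12 (gualtieri s g b I J) = - (1/2) *\<^sub>R (matrix_inv (g ** I) - s *\<^sub>R matrix_inv (g ** J))"
  "blk11 (gualtieri s g b I J) = (1/2) *\<^sub>R (I + s *\<^sub>R J + (matrix_inv (g ** I) - s *\<^sub>R matrix_inv (g ** J)) ** b)"
  by (rule Alg_eqI, simp add: gualtieri_def blk_matrix_mult Alg_hom algebra_simps)+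

lemma gualtieri_block_combinations:
  fixes g b I J :: "real^'n::finite^'n"
  defines "J1 \<equiv> J1_of g b I J" and "J2 \<equiv> J2_of g b I J"
  shows "- (blk12 J1 + blk12 J2) = matrix_inv (g ** I)"
    and "blk12 J1 - blk12 J2 = matrix_inv (g ** J)"
    and "blk11 J1 + blk11 J2 = I + matrix_inv (g ** I) ** b"
    and "blk11 J1 - blk11 J2 = J - matrix_inv (g ** J) ** b"
  unfolding J1_def J2_def J1_of_def J2_of_def
  by (rule Alg_eqI, rule scaleR_left_imp_eq[of 2], simp,
      simp only: blk_gualtieri Alg_hom, simp add: scaleR_2 algebra_simps)+

lemma PhiK_gualtieri_combinations:
  fixes g b I J K :: "real^'n::finite^'n"
  defines "J1 \<equiv> J1_of g b I J" and "J2 \<equiv> J2_of g b I J"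
    and "\<sigma> \<equiv> matrix_inv (g ** I)" and "\<tau> \<equiv> matrix_inv (g ** J)" and "k \<equiv> (1/2) *\<^sub>R K"
  shows "- (blk12 (PhiK K J1) + blk12 (PhiK K J2)) = - (\<sigma> ** k ** \<sigma> + \<tau> ** k ** \<tau>)"
    and "blk12 (PhiK K J1) - blk12 (PhiK K J2) = - (\<sigma> ** k ** \<tau> + \<tau> ** k ** \<sigma>)"
    and "blk11 (PhiK K J1) + blk11 (PhiK K J2)
      = - (\<sigma> ** k ** I - \<tau> ** k ** J) - (\<sigma> ** k ** \<sigma> + \<tau> ** k ** \<tau>) ** b"
    and "blk11 (PhiK K J1) - blk11 (PhiK K J2)
      = - (\<sigma> ** k ** J - \<tau> ** k ** I) + (\<sigma> ** k ** \<tau> + \<tau> ** k ** \<sigma>) ** b"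
  unfolding J1_def J2_def J1_of_def J2_of_def \<sigma>_def \<tau>_def k_def
  by (rule Alg_eqI, rule scaleR_left_imp_eq[of 4], simp,
      simp only: blk_PhiK blk_gualtieri Alg_hom, simp add: scaleR_2 algebra_simps)+


section \<open>Differentiating the canonical flow\<close>

lemma has_vector_derivative_locally_constant:
  assumes "(f has_vector_derivative D) (at t)" and "open S" and "t \<in> S"
    and "\<And>s. s \<in> S \<Longrightarrow> f s = c"
  shows "D = 0"
proof -
  have "((\<lambda>s. c) has_vector_derivative D) (at t)"
    using has_vector_derivative_transform_within_open[OF assms(1-3)] assms(4) by auto
  then show ?thesis using vector_derivative_unique_at has_vector_derivative_const by blast
qed

lemma has_vector_derivative_fixed_by_linear:
  assumes L: "bounded_linear L" and df: "(f has_vector_derivative D) (at t)"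
    and "open S" and "t \<in> S" and fixed: "\<And>s. s \<in> S \<Longrightarrow> L (f s) = f s"
  shows "L D = D"
proof -
  have "(f has_vector_derivative L D) (at t)"
    using has_vector_derivative_transform_within_open[OF
        bounded_linear.has_vector_derivative[OF L df] \<open>open S\<close> \<open>t \<in> S\<close>] fixed by auto
  then show ?thesis using df vector_derivative_unique_at by blast
qed

lemma has_vector_derivative_matrix_mult:
  fixes f g :: "real \<Rightarrow> real^'n::finite^'n"
  assumes "(f has_vector_derivative f') (at t)" and "(g has_vector_derivative g') (at t)"
  shows "((\<lambda>s. f s ** g s) has_vector_derivative f t ** g' + f' ** g t) (at t)"
  using bounded_bilinear.has_vector_derivative[OF bounded_bilinear_matrix_mult assms] .

lemma has_vector_derivative_sum_matrix_mult_eq: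
  fixes A B C :: "real \<Rightarrow> real^'n::finite^'n"
  assumes "((\<lambda>s. A s + B s ** C s) has_vector_derivative D) (at t)"
    and "(A has_vector_derivative A') (at t)" and "(B has_vector_derivative B') (at t)"
    and "(C has_vector_derivative C') (at t)"
  shows "D = A' + (B t ** C' + B' ** C t)"
  using vector_derivative_unique_at[OF assms(1)]
    has_vector_derivative_add[OF assms(2) has_vector_derivative_matrix_mult[OF assms(3,4)]] .

lemma has_vector_derivative_matrix_inverse:
  fixes f \<sigma> :: "real \<Rightarrow> real^'n::finite^'n"
  assumes df: "(f has_vector_derivative F) (at t)" and d\<sigma>: "(\<sigma> has_vector_derivative \<Sigma>) (at t)"
    and "open S" and "t \<in> S" and inverse: "\<And>s. s \<in> S \<Longrightarrow> f s ** \<sigma> s = mat 1"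
    and \<sigma>f: "\<sigma> t ** f t = mat 1"
  shows "F = - (f t ** \<Sigma> ** f t)"
proof -
  have "f t ** \<Sigma> + F ** \<sigma> t = 0"
    using has_vector_derivative_locally_constant[OF has_vector_derivative_matrix_mult[OF df d\<sigma>]
        \<open>open S\<close> \<open>t \<in> S\<close> inverse] .
  then have "(f t ** \<Sigma> + F ** \<sigma> t) ** f t = 0" by simp
  then show ?thesis
    using \<sigma>f by (simp add: matrix_add_rdistrib flip: matrix_mul_assoc eq_neg_iff_add_eq_0)
qed

lemma gualtieri_flow_derivatives:
  fixes g b I J :: "real \<Rightarrow> real^'n::finite^'n" and K :: "real^'n^'n"
  defines "\<sigma> \<equiv> \<lambda>s. matrix_inv (g s ** I s)" and "\<tau> \<equiv> \<lambda>s. matrix_inv (g s ** J s)"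
    and "k \<equiv> (1/2) *\<^sub>R K"
  assumes flow1: "((\<lambda>s. J1_of (g s) (b s) (I s) (J s)) has_vector_derivative
        PhiK K (J1_of (g t) (b t) (I t) (J t))) (at t)"
    and flow2: "((\<lambda>s. J2_of (g s) (b s) (I s) (J s)) has_vector_derivative
        PhiK K (J2_of (g t) (b t) (I t) (J t))) (at t)"
    and db: "(b has_vector_derivative x) (at t)"
    and dI: "(I has_vector_derivative P) (at t)" and dJ: "(J has_vector_derivative Q) (at t)"
  shows "(\<sigma> has_vector_derivative - (\<sigma> t ** k ** \<sigma> t + \<tau> t ** k ** \<tau> t)) (at t)"
    and "(\<tau> has_vector_derivative - (\<sigma> t ** k ** \<tau> t + \<tau> t ** k ** \<sigma> t)) (at t)"
    and "P + \<sigma> t ** x = - (\<sigma> t ** k ** I t - \<tau> t ** k ** J t)"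
    and "Q - \<tau> t ** x = - (\<sigma> t ** k ** J t - \<tau> t ** k ** I t)"
proof -
  define J1 where "J1 = (\<lambda>s. J1_of (g s) (b s) (I s) (J s))"
  define J2 where "J2 = (\<lambda>s. J2_of (g s) (b s) (I s) (J s))"
  have f1: "(J1 has_vector_derivative PhiK K (J1 t)) (at t)"
    and f2: "(J2 has_vector_derivative PhiK K (J2 t)) (at t)"
    using flow1 flow2 unfolding J1_def J2_def by simp_all
  have at_t: "J1 t = J1_of (g t) (b t) (I t) (J t)" "J2 t = J2_of (g t) (b t) (I t) (J t)"
    "\<sigma> t = matrix_inv (g t ** I t)" "\<tau> t = matrix_inv (g t ** J t)"
    unfolding J1_def J2_def \<sigma>_def \<tau>_def by simp_all
  note Phi = PhiK_gualtieri_combinations[where g="g t" and b="b t" and I="I t" and J="J t" and K=K,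
      folded at_t k_def]
  note comb = gualtieri_block_combinations[where g="g s" and b="b s" and I="I s" and J="J s" for s]
  note d12 = f1[THEN bounded_linear.has_vector_derivative[OF bounded_linear_blk12]]
    f2[THEN bounded_linear.has_vector_derivative[OF bounded_linear_blk12]]
  note d11 = f1[THEN bounded_linear.has_vector_derivative[OF bounded_linear_blk11]]
    f2[THEN bounded_linear.has_vector_derivative[OF bounded_linear_blk11]]
  have \<sigma>_blocks: "\<sigma> = (\<lambda>s. - (blk12 (J1 s) + blk12 (J2 s)))"
    unfolding \<sigma>_def J1_def J2_def comb ..
  have "(\<sigma> has_vector_derivative - (blk12 (PhiK K (J1 t)) + blk12 (PhiK K (J2 t)))) (at t)"
    unfolding \<sigma>_blocks by (intro derivative_intros d12)
  then show d\<sigma>: "(\<sigma> has_vector_derivative - (\<sigma> t ** k ** \<sigma> t + \<tau> t ** k ** \<tau> t)) (at t)"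
    unfolding Phi(1) .
  have \<tau>_blocks: "\<tau> = (\<lambda>s. blk12 (J1 s) - blk12 (J2 s))"
    unfolding \<tau>_def J1_def J2_def comb ..
  have "(\<tau> has_vector_derivative blk12 (PhiK K (J1 t)) - blk12 (PhiK K (J2 t))) (at t)"
    unfolding \<tau>_blocks by (intro derivative_intros d12)
  then show d\<tau>: "(\<tau> has_vector_derivative - (\<sigma> t ** k ** \<tau> t + \<tau> t ** k ** \<sigma> t)) (at t)"
    unfolding Phi(2) .
  have I_blocks: "(\<lambda>s. I s + \<sigma> s ** b s) = (\<lambda>s. blk11 (J1 s) + blk11 (J2 s))"
    unfolding \<sigma>_def J1_def J2_def comb ..
  have "blk11 (PhiK K (J1 t)) + blk11 (PhiK K (J2 t))
      = P + (\<sigma> t ** x + - (\<sigma> t ** k ** \<sigma> t + \<tau> t ** k ** \<tau> t) ** b t)"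
    by (rule has_vector_derivative_sum_matrix_mult_eq[OF _ dI d\<sigma> db])
      (unfold I_blocks, intro derivative_intros d11)
  then show "P + \<sigma> t ** x = - (\<sigma> t ** k ** I t - \<tau> t ** k ** J t)"
    unfolding Phi(3) by (simp only: matrix_mul_minus_left) simp
  have J_blocks: "(\<lambda>s. J s + (- \<tau> s) ** b s) = (\<lambda>s. blk11 (J1 s) - blk11 (J2 s))"
    unfolding \<tau>_def J1_def J2_def comb by (simp add: matrix_mul_minus_left)
  have "blk11 (PhiK K (J1 t)) - blk11 (PhiK K (J2 t))
      = Q + (- \<tau> t ** x + - (- (\<sigma> t ** k ** \<tau> t + \<tau> t ** k ** \<sigma> t)) ** b t)"
    by (rule has_vector_derivative_sum_matrix_mult_eq[OF _ dJ has_vector_derivative_minus[OF d\<tau>] db])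
      (unfold J_blocks, intro derivative_intros d11)
  then show "Q - \<tau> t ** x = - (\<sigma> t ** k ** J t - \<tau> t ** k ** I t)"
    unfolding Phi(4) by (simp only: matrix_mul_minus_left minus_minus) simp
qed

lemma canonical_flow_linearization:
  fixes g b I J :: "real \<Rightarrow> real^'n::finite^'n" and K :: "real^'n^'n"
  assumes "open S" and "t \<in> S"
    and bih: "\<And>s. s \<in> S \<Longrightarrow> bihermitian (g s) (b s) (I s) (J s)"
    and flow1: "((\<lambda>s. J1_of (g s) (b s) (I s) (J s)) has_vector_derivative
        PhiK K (J1_of (g t) (b t) (I t) (J t))) (at t)"
    and flow2: "((\<lambda>s. J2_of (g s) (b s) (I s) (J s)) has_vector_derivative
        PhiK K (J2_of (g t) (b t) (I t) (J t))) (at t)"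
    and dg: "(g has_vector_derivative G) (at t)" and db: "(b has_vector_derivative x) (at t)"
    and dI: "(I has_vector_derivative P) (at t)" and dJ: "(J has_vector_derivative Q) (at t)"
  defines "\<sigma> \<equiv> matrix_inv (g t ** I t)" and "\<tau> \<equiv> matrix_inv (g t ** J t)"
    and "k \<equiv> (1/2) *\<^sub>R K"
  shows "transpose G = G" and "transpose x = - x"
    and "G ** I t + g t ** P = (g t ** I t) ** (\<sigma> ** k ** \<sigma> + \<tau> ** k ** \<tau>) ** (g t ** I t)"
    and "G ** J t + g t ** Q = (g t ** J t) ** (\<sigma> ** k ** \<tau> + \<tau> ** k ** \<sigma>) ** (g t ** J t)"
    and "P + \<sigma> ** x = - (\<sigma> ** k ** I t - \<tau> ** k ** J t)"
    and "Q - \<tau> ** x = - (\<sigma> ** k ** J t - \<tau> ** k ** I t)"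
    and "P ** I t + I t ** P = 0"
proof -
  note B = bih[unfolded bihermitian_def is_2form_def]
  have gh: "\<And>s. s \<in> S \<Longrightarrow> g s ** matrix_inv (g s) = mat 1"
    using positive_definite_matrix_inv B by blast
  have I_inv: "\<And>s. s \<in> S \<Longrightarrow> (g s ** I s) ** matrix_inv (g s ** I s) = mat 1"
      "\<And>s. s \<in> S \<Longrightarrow> matrix_inv (g s ** I s) ** (g s ** I s) = mat 1"
    and J_inv: "\<And>s. s \<in> S \<Longrightarrow> (g s ** J s) ** matrix_inv (g s ** J s) = mat 1"
      "\<And>s. s \<in> S \<Longrightarrow> matrix_inv (g s ** J s) ** (g s ** J s) = mat 1"
    using orthogonal_complex_structure_inverse(2,3) gh B by blast+
  note flow = gualtieri_flow_derivatives[OF flow1 flow2 db dI dJ, folded \<sigma>_def \<tau>_def k_def]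
  show "transpose G = G"
    by (rule has_vector_derivative_fixed_by_linear[OF bounded_linear_transpose dg \<open>open S\<close> \<open>t \<in> S\<close>])
      (use B in blast)
  have "- transpose x = x"
    by (rule has_vector_derivative_fixed_by_linear[OF bounded_linear_minus[OF bounded_linear_transpose]
          db \<open>open S\<close> \<open>t \<in> S\<close>]) (use B in force)
  then show "transpose x = - x" by (metis minus_minus)
  have "g t ** P + G ** I t = - ((g t ** I t) ** - (\<sigma> ** k ** \<sigma> + \<tau> ** k ** \<tau>) ** (g t ** I t))"
    by (rule has_vector_derivative_matrix_inverse[OF has_vector_derivative_matrix_mult[OF dg dI] flow(1)
        \<open>open S\<close> \<open>t \<in> S\<close>]) (simp_all add: I_inv \<open>t \<in> S\<close> \<sigma>_def)
  then show "G ** I t + g t ** P = (g t ** I t) ** (\<sigma> ** k ** \<sigma> + \<tau> ** k ** \<tau>) ** (g t ** I t)"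
    by (simp only: matrix_mul_minus_left matrix_mul_minus_right minus_minus add.commute)
  have "g t ** Q + G ** J t = - ((g t ** J t) ** - (\<sigma> ** k ** \<tau> + \<tau> ** k ** \<sigma>) ** (g t ** J t))"
    by (rule has_vector_derivative_matrix_inverse[OF has_vector_derivative_matrix_mult[OF dg dJ] flow(2)
        \<open>open S\<close> \<open>t \<in> S\<close>]) (simp_all add: J_inv \<open>t \<in> S\<close> \<tau>_def)
  then show "G ** J t + g t ** Q = (g t ** J t) ** (\<sigma> ** k ** \<tau> + \<tau> ** k ** \<sigma>) ** (g t ** J t)"
    by (simp only: matrix_mul_minus_left matrix_mul_minus_right minus_minus add.commute)
  show "P + \<sigma> ** x = - (\<sigma> ** k ** I t - \<tau> ** k ** J t)"
    and "Q - \<tau> ** x = - (\<sigma> ** k ** J t - \<tau> ** k ** I t)"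
    using flow(3,4) by simp_all
  have "I t ** P + P ** I t = 0"
    by (rule has_vector_derivative_locally_constant[OF has_vector_derivative_matrix_mult[OF dI dI]
          \<open>open S\<close> \<open>t \<in> S\<close>]) (use B in blast)
  then show "P ** I t + I t ** P = 0" by (simp add: add.commute)
qed

lemma formbr_scaleR: "formbr (c *\<^sub>R K) A = c *\<^sub>R formbr K A"
  and formac_scaleR: "formac (c *\<^sub>R K) A = c *\<^sub>R formac K A"
  by (simp_all add: formbr_def formac_def matrix_scaleR_left matrix_scaleR_right
      scaleR_diff_right scaleR_add_right)

theorem proposition3p6:
  fixes S :: "real set"
    and g b I J K :: "real \<Rightarrow> real^'n::finite^'n"
  assumes "open S"
    and bih: "\<And>t. t \<in> S \<Longrightarrow> bihermitian (g t) (b t) (I t) (J t)"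
    and Kform: "\<And>t. t \<in> S \<Longrightarrow> is_2form (K t)"
    and diff: "\<And>t. t \<in> S \<Longrightarrow>
        g differentiable at t \<and> b differentiable at t \<and>
        I differentiable at t \<and> J differentiable at t"
    and flow1: "\<And>t. t \<in> S \<Longrightarrow>
        ((\<lambda>s. J1_of (g s) (b s) (I s) (J s)) has_vector_derivative
          PhiK (K t) (J1_of (g t) (b t) (I t) (J t))) (at t)"
    and flow2: "\<And>t. t \<in> S \<Longrightarrow>
        ((\<lambda>s. J2_of (g s) (b s) (I s) (J s)) has_vector_derivative
          PhiK (K t) (J2_of (g t) (b t) (I t) (J t))) (at t)"
    and "t \<in> S"
  shows "(g has_vector_derivative (- (1/2)) *\<^sub>R formbr (K t) (I t)) (at t)
    \<and> (b has_vector_derivative (- (1/2)) *\<^sub>R formac (K t) (I t)) (at t)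
    \<and> ((\<lambda>s. g s ** I s) has_vector_derivative
          (- (1/2)) *\<^sub>R (formbr (K t) (I t) ** I t)) (at t)
    \<and> ((\<lambda>s. g s ** J s) has_vector_derivative
          (- (1/2)) *\<^sub>R formac (K t) (I t ** J t)) (at t)
    \<and> (I has_vector_derivative 0) (at t)
    \<and> (J has_vector_derivative
          (1/2) *\<^sub>R (endo_comm (I t) (J t) ** matrix_inv (g t) ** K t)) (at t)"
proof -
  obtain G x P Q where dg: "(g has_vector_derivative G) (at t)"
    and db: "(b has_vector_derivative x) (at t)"
    and dI: "(I has_vector_derivative P) (at t)" and dJ: "(J has_vector_derivative Q) (at t)"
    using diff[OF \<open>t \<in> S\<close>] vector_derivative_works by blast
  have "transpose ((1/2) *\<^sub>R K t) = - ((1/2) *\<^sub>R K t)"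
    using Kform[OF \<open>t \<in> S\<close>] by (simp add: is_2form_def transpose_scalar)
  note solution = bihermitian_linearized_flow_solution[OF bih[OF \<open>t \<in> S\<close>] this
      canonical_flow_linearization[OF \<open>open S\<close> \<open>t \<in> S\<close> bih flow1[OF \<open>t \<in> S\<close>]
        flow2[OF \<open>t \<in> S\<close>] dg db dI dJ]]
  have gI: "((\<lambda>s. g s ** I s) has_vector_derivative G ** I t + g t ** P) (at t)"
    and gJ: "((\<lambda>s. g s ** J s) has_vector_derivative G ** J t + g t ** Q) (at t)"
    using has_vector_derivative_matrix_mult[OF dg dI] has_vector_derivative_matrix_mult[OF dg dJ]
    by (simp_all add: add.commute)
  show ?thesis
    using dg db dI dJ gI gJ solution
    by (simp add: formbr_scaleR formac_scaleR matrix_scaleR_right matrix_mul_minus_left matrix_scaleR_left)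
qed

end
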